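(* In the Simpler Lazy Set algorithm, for every step $(S,e,T)$ (with $S$ normal) and every address $a$: if $a$ is removed at $S$, then $a$ is removed at $T$.
   Context: Simpler Lazy Set algorithm. Fix a countably infinite set $A$ of addresses with distinguished $\mathsf H,\mathsf T$; $\mathrm{Number}=\mathbb N\cup\{-1,\infty\}$. A state $S$: finite set $\mathrm{Active}^S\subseteq A$, $\mathrm{Next}^S:\mathrm{Active}^S\setminus\{\mathsf T\}\to A$, $\mathrm{Val}^S:\mathrm{Active}^S\to\mathrm{Number}$, and for each process $p$: $PC_p\in\{0,1,2,3.1,3.2,3.3,3.4,3.5\}$, $x_p\in\mathbb N$, $\mathrm{curr}_p\in A$, $\mathrm{status}_p\in\{0,1,f\}$. $S$ is normal if $\mathsf H,\mathsf T$ are active with values $-1,\infty$, other active addresses have values in $\mathbb N$, and for active $a\neq\mathsf T$, $\mathrm{Next}(a)$ is active with $\mathrm{Val}(a)<\mathrm{Val}(\mathrm{Next}(a))$. A path is a sequence $a_1,\dots,a_m$ ($m>1$) of active addresses with $\mathrm{Next}(a_i)=a_{i+1}$; the main branch is the path from $\mathsf H$ to $\mathsf T$. An address is removed at $S$ if it is active in $S$ but not on the main branch of $S$. Steps $(S,e,T)$ of process $p$ on a normal state $S$ (each with a status $\chi(e)$, and some with an address $\mathrm{adr}(e)$): (i) invocation: $PC_p^S=0$, $PC_p^T\in\{1,2,3.1\}$, $x_p^T\in\mathbb N$ arbitrary, nothing else changes; (ii) failure: $PC_p^S\in\{1,2\}$, $PC_p^T=0$, $\chi(e)=f$, nothing else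 changes; (iii) $\mathrm{AD}(x)$ with $x=x_p$, $PC_p^S=1$, $PC_p^T=0$: let $\mathfrak p$ be the address on the main branch with $\mathrm{Val}(\mathfrak p)<x\le\mathrm{Val}(\mathrm{Next}(\mathfrak p))$; if $\mathrm{Val}(\mathrm{Next}(\mathfrak p))=x$, nothing else changes, $\chi(e)=1$, $\mathrm{adr}(e)=\mathrm{Next}^S(\mathfrak p)$; otherwise choose $a\notin\mathrm{Active}^S$, set $\mathrm{Active}^T=\mathrm{Active}^S\cup\{a\}$, $\mathrm{Val}^T(a)=x$, $\mathrm{Next}^T(\mathfrak p)=a$, $\mathrm{Next}^T(a)=\mathrm{Next}^S(\mathfrak p)$, $\chi(e)=0$, $\mathrm{adr}(e)=a$ ($e$ activates $a$); (iv) $\mathrm{RM}(x)$ with $x=x_p$, $PC_p^S=2$, $PC_p^T=0$: if the main branch contains $cu$ with value $x$ and $pred$ is the main-branch address with $\mathrm{Next}^S(pred)=cu$, then $\mathrm{Next}^T(pred)=\mathrm{Next}^S(cu)$, $\chi(e)=1$, $\mathrm{adr}(e)=cu$; otherwise nothing else changes and $\chi(e)=0$; (v) CONTAINS$(x)$ lines with $x=x_p$, each an atomic step changing only $\mathrm{curr}_p,PC_p,\mathrm{status}_p$: 3.1: $\mathrm{curr}:=\mathsf H$; 3.2/3.3: $\mathrm{curr}:=\mathrm{Next}(\mathrm{curr})$ (read in the current state); 3.4: if $\mathrm{Val}(\mathrm{curr})\ge x$ go to 3.5, else back to 3.3; 3.5: return status $1$ if $\mathrm{Val}(\mathrm{curr})=x$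 and $0$ otherwise, $PC_p:=0$. *)

theory Defs
  imports Main
begin

datatype number = NegOne | Nat nat | Infty

fun num_less :: "number \<Rightarrow> number \<Rightarrow> bool" where
  "num_less _ NegOne = False"
| "num_less NegOne _ = True"
| "num_less (Nat m) (Nat n) = (m < n)"
| "num_less (Nat m) Infty = True"
| "num_less Infty _ = False"

definition num_le :: "number \<Rightarrow> number \<Rightarrow> bool" where
  "num_le a b \<longleftrightarrow> num_less a b \<or> a = b"

datatype pcv = P0 | P1 | P2 | P31 | P32 | P33 | P34 | P35

datatype stv = St0 | St1 | Stf

record ('a, 'p) state =
  active :: "'a set"
  nxt    :: "'a \<rightharpoonup> 'a"
  vl     :: "'a \<rightharpoonup> number"
  pc     :: "'p \<Rightarrow> pcv"
  xv     :: "'p \<Rightarrow> nat"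
  curr   :: "'p \<Rightarrow> 'a"
  status :: "'p \<Rightarrow> stv"

definition is_state :: "'a \<Rightarrow> ('a, 'p) state \<Rightarrow> bool" where
  "is_state Tl S \<longleftrightarrow> finite (active S) \<and> dom (nxt S) = active S - {Tl}
      \<and> dom (vl S) = active S"

definition normal :: "'a \<Rightarrow> 'a \<Rightarrow> ('a, 'p) state \<Rightarrow> bool" where
  "normal Hd Tl S \<longleftrightarrow>
     Hd \<in> active S \<and> Tl \<in> active S \<and> vl S Hd = Some NegOne \<and> vl S Tl = Some Infty
     \<and> (\<forall>a \<in> active S - {Hd, Tl}. \<exists>n. vl S a = Some (Nat n))
     \<and> (\<forall>a \<in> active S - {Tl}. \<exists>b va vb. nxt S a = Some b \<and> b \<in> active S
            \<and> vl S a = Some va \<and> vl S b = Some vb \<and> num_less va vb)"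

definition is_path :: "('a, 'p) state \<Rightarrow> 'a list \<Rightarrow> bool" where
  "is_path S xs \<longleftrightarrow> length xs > 1 \<and> set xs \<subseteq> active S
     \<and> (\<forall>i. Suc i < length xs \<longrightarrow> nxt S (xs ! i) = Some (xs ! Suc i))"

definition on_main :: "'a \<Rightarrow> 'a \<Rightarrow> ('a, 'p) state \<Rightarrow> 'a \<Rightarrow> bool" where
  "on_main Hd Tl S a \<longleftrightarrow>
     (\<exists>xs. is_path S xs \<and> hd xs = Hd \<and> last xs = Tl \<and> a \<in> set xs)"

definition removed :: "'a \<Rightarrow> 'a \<Rightarrow> ('a, 'p) state \<Rightarrow> 'a \<Rightarrow> bool" where
  "removed Hd Tl S a \<longleftrightarrow> a \<in> active S \<and> \<not> on_main Hd Tl S a"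

datatype ekind = Invoke | Failure | AddE | RemE | Line pcv

record ('a, 'p) event =
  eproc :: 'p
  ekind :: ekind
  chi   :: stv
  adr   :: "'a option"

definition set_pc :: "'p \<Rightarrow> pcv \<Rightarrow> ('a, 'p) state \<Rightarrow> ('a, 'p) state" where
  "set_pc p v S = S\<lparr>pc := (pc S)(p := v)\<rparr>"

definition step :: "'a \<Rightarrow> 'a \<Rightarrow> ('a, 'p) state \<Rightarrow> ('a, 'p) event \<Rightarrow> ('a, 'p) state \<Rightarrow> bool" where
  "step Hd Tl S e T' \<longleftrightarrow> normal Hd Tl S \<and> (let p = eproc e; x = xv S p in
   (ekind e = Invoke \<and> pc S p = P0 \<and>
      (\<exists>v n. v \<in> {P1, P2, P31} \<and> T' = S\<lparr>pc := (pc S)(p := v), xv := (xv S)(p := n)\<rparr>))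
 \<or> (ekind e = Failure \<and> pc S p \<in> {P1, P2} \<and> chi e = Stf \<and> T' = set_pc p P0 S)
 \<or> (ekind e = AddE \<and> pc S p = P1 \<and>
      (\<exists>pp b vp. on_main Hd Tl S pp \<and> pp \<noteq> Tl \<and> nxt S pp = Some b \<and> vl S pp = Some vp
         \<and> num_less vp (Nat x) \<and> (\<exists>vb. vl S b = Some vb \<and> num_le (Nat x) vb) \<and>
         ((vl S b = Some (Nat x) \<and> chi e = St1 \<and> adr e = Some b \<and> T' = set_pc p P0 S)
        \<or> (vl S b \<noteq> Some (Nat x) \<and>
            (\<exists>a. a \<notin> active S \<and> chi e = St0 \<and> adr e = Some a \<and>
               T' = (set_pc p P0 S)\<lparr>active := insert a (active S),
                                    vl := (vl S)(a \<mapsto> Nat x),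
                                    nxt := (nxt S)(pp \<mapsto> a, a \<mapsto> b)\<rparr>)))))
 \<or> (ekind e = RemE \<and> pc S p = P2 \<and>
      ((\<exists>cu pred. on_main Hd Tl S cu \<and> vl S cu = Some (Nat x) \<and> on_main Hd Tl S pred
          \<and> nxt S pred = Some cu \<and> chi e = St1 \<and> adr e = Some cu \<and>
          T' = (set_pc p P0 S)\<lparr>nxt := (nxt S)(pred := nxt S cu)\<rparr>)
     \<or> ((\<nexists>cu. on_main Hd Tl S cu \<and> vl S cu = Some (Nat x)) \<and> chi e = St0 \<and>
          T' = set_pc p P0 S)))
 \<or> (ekind e = Line P31 \<and> pc S p = P31 \<and>
      T' = S\<lparr>pc := (pc S)(p := P32), curr := (curr S)(p := Hd)\<rparr>)
 \<or> (ekind e = Line P32 \<and> pc S p = P32 \<and>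
      (\<exists>c. (case nxt S (curr S p) of Some c' \<Rightarrow> c = c' | None \<Rightarrow> True) \<and>
         T' = S\<lparr>pc := (pc S)(p := P34), curr := (curr S)(p := c)\<rparr>))
 \<or> (ekind e = Line P33 \<and> pc S p = P33 \<and>
      (\<exists>c. (case nxt S (curr S p) of Some c' \<Rightarrow> c = c' | None \<Rightarrow> True) \<and>
         T' = S\<lparr>pc := (pc S)(p := P34), curr := (curr S)(p := c)\<rparr>))
 \<or> (ekind e = Line P34 \<and> pc S p = P34 \<and>
      (\<exists>v. (case vl S (curr S p) of
               Some w \<Rightarrow> v = (if num_le (Nat x) w then P35 else P33)
             | None \<Rightarrow> v \<in> {P33, P35}) \<and>
         T' = S\<lparr>pc := (pc S)(p := v)\<rparr>))
 \<or> (ekind e = Line P35 \<and> pc S p = P35 \<and>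
      (\<exists>s. (case vl S (curr S p) of
               Some w \<Rightarrow> s = (if w = Nat x then St1 else St0)
             | None \<Rightarrow> s \<in> {St0, St1}) \<and>
         T' = S\<lparr>pc := (pc S)(p := P0), status := (status S)(p := s)\<rparr>)))"

end

theory Submission
  imports Defs
begin

text \<open>The addresses on the main branch of \<open>S\<close> form a set closed under \<open>Next\<close>, because the
  tail is the only address without successor. A step changes \<open>Next\<close> only by linking a fresh
  address between two consecutive main-branch addresses, or by redirecting a pointer to a
  main-branch address; in both cases the main-branch addresses of \<open>S\<close>, together with the
  fresh one, stay closed under the new \<open>Next\<close>. Every path from the head in the new state therefore
  stays inside this set, which does not contain an address removed at \<open>S\<close>.\<close>

definition map_closed :: "('a \<rightharpoonup> 'a) \<Rightarrow> 'a set \<Rightarrow> bool" where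
  "map_closed f M \<longleftrightarrow> (\<forall>c\<in>M. \<forall>d. f c = Some d \<longrightarrow> d \<in> M)"

lemma map_closed_insert_link:
  assumes "map_closed f M" "p \<in> M" "f p = Some b"
  shows "map_closed (f(p \<mapsto> a, a \<mapsto> b)) (insert a M)"
  using assms unfolding map_closed_def by auto

lemma map_closed_unlink:
  assumes "map_closed f M" "c \<in> M"
  shows "map_closed (f(p := f c)) M"
  using assms unfolding map_closed_def by auto

lemma path_subset_map_closed:
  assumes "is_path S xs" "hd xs \<in> M" "map_closed (nxt S) M"
  shows "set xs \<subseteq> M"
proof -
  have "xs ! i \<in> M" if "i < length xs" for i
    using that
  proof (induction i)
    case 0
    then show ?case using assms(2) by (simp add: hd_conv_nth)
  next
    case (Suc i)
    then show ?case using assms(1,3) unfolding is_path_def map_closed_def by auto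
  qed
  then show ?thesis by (auto simp: in_set_conv_nth)
qed

lemma on_main_in_map_closed:
  assumes "on_main Hd Tl S a" "Hd \<in> M" "map_closed (nxt S) M"
  shows "a \<in> M"
  using assms path_subset_map_closed unfolding on_main_def by blast

lemma on_main_Hd:
  assumes "on_main Hd Tl S c"
  shows "on_main Hd Tl S Hd"
  using assms unfolding on_main_def is_path_def by (metis hd_in_set list.size(3) not_less0)

lemma on_main_succ:
  assumes "on_main Hd Tl S c" "nxt S c = Some d" "nxt S Tl = None"
  shows "on_main Hd Tl S d"
proof -
  obtain xs where xs: "is_path S xs" "hd xs = Hd" "last xs = Tl" "c \<in> set xs"
    using assms(1) unfolding on_main_def by blast
  then obtain i where i: "i < length xs" "xs ! i = c" by (auto simp: in_set_conv_nth)
  have "c \<noteq> Tl" using assms(2,3) by auto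
  then have "Suc i < length xs"
    using xs(3) i by (metis Suc_lessI diff_Suc_1 last_conv_nth list.size(3) not_less0)
  moreover have "xs ! Suc i = d" using calculation xs(1) i assms(2) unfolding is_path_def by auto
  ultimately show ?thesis using xs(1-3) unfolding on_main_def by (metis nth_mem)
qed

lemma on_main_map_closed:
  assumes "nxt S Tl = None"
  shows "map_closed (nxt S) {c. on_main Hd Tl S c}"
  using assms on_main_succ unfolding map_closed_def by fastforce

lemma on_main_cong:
  assumes "active T = active S" "nxt T = nxt S"
  shows "on_main Hd Tl T = on_main Hd Tl S"
  using assms by (simp add: on_main_def is_path_def fun_eq_iff)

lemma removed_if_map_closed:
  assumes "removed Hd Tl S a" "active S \<subseteq> active T"
    "Hd \<in> M" "map_closed (nxt T) M" "a \<notin> M"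
  shows "removed Hd Tl T a"
  using assms on_main_in_map_closed[of Hd Tl T a M] unfolding removed_def by auto

lemma step_heap_cases:
  fixes S T :: "('a, 'p) state" and e :: "('a, 'p) event"
  assumes "step Hd Tl S e T"
  obtains (unchanged) "active T = active S" "nxt T = nxt S"
    | (link) pp b a' where "on_main Hd Tl S pp" "nxt S pp = Some b" "a' \<notin> active S"
        "active T = insert a' (active S)" "nxt T = (nxt S)(pp \<mapsto> a', a' \<mapsto> b)"
    | (unlink) pred cu where "on_main Hd Tl S cu"
        "active T = active S" "nxt T = (nxt S)(pred := nxt S cu)"
proof -
  have "(\<exists>v n. T = S\<lparr>pc := (pc S)(eproc e := v), xv := (xv S)(eproc e := n)\<rparr>)
    \<or> T = set_pc (eproc e) P0 S
    \<or> (\<exists>pp b a'. on_main Hd Tl S pp \<and> nxt S pp = Some b \<and> a' \<notin> active S \<and>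
          T = (set_pc (eproc e) P0 S)\<lparr>active := insert a' (active S),
                 vl := (vl S)(a' \<mapsto> Nat (xv S (eproc e))),
                 nxt := (nxt S)(pp \<mapsto> a', a' \<mapsto> b)\<rparr>)
    \<or> (\<exists>cu pred. on_main Hd Tl S cu \<and> on_main Hd Tl S pred \<and> nxt S pred = Some cu \<and>
          T = (set_pc (eproc e) P0 S)\<lparr>nxt := (nxt S)(pred := nxt S cu)\<rparr>)
    \<or> (\<exists>c. T = S\<lparr>pc := (pc S)(eproc e := P32), curr := (curr S)(eproc e := c)\<rparr>)
    \<or> (\<exists>c. T = S\<lparr>pc := (pc S)(eproc e := P34), curr := (curr S)(eproc e := c)\<rparr>)
    \<or> (\<exists>v. T = S\<lparr>pc := (pc S)(eproc e := v)\<rparr>)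
    \<or> (\<exists>s. T = S\<lparr>pc := (pc S)(eproc e := P0), status := (status S)(eproc e := s)\<rparr>)"
    using assms unfolding step_def Let_def by (elim conjE disjE exE) blast+
  then show ?thesis
    using that unfolding set_pc_def by (elim disjE exE conjE) simp_all
qed

theorem lemma4p7:
  fixes Hd Tl :: 'a and S T' :: "('a, 'p) state" and e :: "('a, 'p) event" and a :: 'a
  assumes "Hd \<noteq> Tl"
    and "infinite (UNIV :: 'a set)"
    and "is_state Tl S"
    and "normal Hd Tl S"
    and "step Hd Tl S e T'"
    and "removed Hd Tl S a"
  shows "removed Hd Tl T' a"
proof -
  let ?M = "{c. on_main Hd Tl S c}"
  have "nxt S Tl = None" using assms(3) unfolding is_state_def by auto
  then have closed: "map_closed (nxt S) ?M" by (rule on_main_map_closed)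
  have a: "a \<notin> ?M" using assms(6) unfolding removed_def by auto
  from assms(5) show ?thesis
  proof (cases rule: step_heap_cases)
    case unchanged
    then show ?thesis using assms(6) on_main_cong[OF unchanged] unfolding removed_def by simp
  next
    case (link pp b a')
    have "map_closed (nxt T') (insert a' ?M)"
      using map_closed_insert_link[OF closed _ link(2)] link(1,5) by simp
    moreover have "Hd \<in> insert a' ?M" using on_main_Hd[OF link(1)] by simp
    moreover have "a \<notin> insert a' ?M" using a link(3) assms(6) unfolding removed_def by auto
    ultimately show ?thesis
      using link(4) by (intro removed_if_map_closed[OF assms(6)]) auto
  next
    case (unlink pred cu)
    have "map_closed (nxt T') ?M"
      using map_closed_unlink[OF closed] unlink(1,3) by simp
    moreover have "Hd \<in> ?M" using on_main_Hd[OF unlink(1)] by simp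
    ultimately show ?thesis
      using unlink(2) a by (intro removed_if_map_closed[OF assms(6)]) auto
  qed
qed

end
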